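(* Let $I,J$ be positive integers, let $a_1,\ldots,a_J\in[0,\infty)^I$ be nonzero vectors, and consider the statistical model in which, for a parameter $\theta=(\theta_1,\ldots,\theta_I)\in(0,\infty)^I$, the observed counts $n_1,\ldots,n_J$ are independent with $n_j\sim\mathrm{Poisson}(\theta\cdot a_j)$, with joint probability mass function $$f_\theta(n_1,\ldots,n_J)=\prod_{j=1}^J\frac{(\theta\cdot a_j)^{n_j}e^{-\theta\cdot a_j}}{n_j!}.$$ Let $\mathcal{C}=\{C_1,\ldots,C_K\}$ be the maximal collapsing of $s_1,\ldots,s_J$ and let $T(n_1,\ldots,n_J)=(n_{C_1},\ldots,n_{C_K})$ with $n_{C_k}=\sum_{s_j\in C_k}n_j$. Then $T$ is a minimal sufficient statistic for $\theta$; that is, for any two count vectors $x,y\in\mathbb{Z}_{\ge0}^J$, the ratio $f_\theta(x)/f_\theta(y)$ does not depend on $\theta$ if and only if $T(x)=T(y)$.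
   Context: Read type $s_j$ has sampling rate vector $a_j=(a_{1,j},\ldots,a_{I,j})$ and $\theta\cdot a_j=\sum_i\theta_i a_{i,j}$. A collapsing of $s_1,\ldots,s_J$ is a partition $\{C_1,\ldots,C_K\}$ of $\{s_1,\ldots,s_J\}$ into nonempty disjoint categories such that whenever $s_{j_1},s_{j_2}$ lie in the same category, $a_{j_1}=c\,a_{j_2}$ for some real $c>0$; it is maximal if moreover, for reads $s_{j_1}\in C_{k_1}$, $s_{j_2}\in C_{k_2}$ with $k_1\ne k_2$, there is no real $c>0$ with $a_{j_1}=c\,a_{j_2}$. (Equivalently, the maximal collapsing groups reads exactly according to equality of the normalized vectors $a_j/\|a_j\|$.) *)

theory Defs
  imports Complex_Main
begin

(* Sampling rate vectors: a i j = a_{i,j}, i < I (component), j < J (read type).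
   Parameters theta :: nat => real, components i < I. Count vectors :: nat => nat, entries j < J. *)

definition dotp :: "nat \<Rightarrow> (nat \<Rightarrow> real) \<Rightarrow> (nat \<Rightarrow> nat \<Rightarrow> real) \<Rightarrow> nat \<Rightarrow> real" where
  "dotp I \<theta> a j = (\<Sum>i<I. \<theta> i * a i j)"

definition pois_pmf :: "nat \<Rightarrow> nat \<Rightarrow> (nat \<Rightarrow> nat \<Rightarrow> real) \<Rightarrow> (nat \<Rightarrow> real) \<Rightarrow> (nat \<Rightarrow> nat) \<Rightarrow> real" where
  "pois_pmf I J a \<theta> n =
     (\<Prod>j<J. (dotp I \<theta> a j) ^ (n j) * exp (- dotp I \<theta> a j) / fact (n j))"

definition pos_multiple :: "nat \<Rightarrow> (nat \<Rightarrow> nat \<Rightarrow> real) \<Rightarrow> nat \<Rightarrow> nat \<Rightarrow> bool" where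
  "pos_multiple I a j1 j2 = (\<exists>c::real. c > 0 \<and> (\<forall>i<I. a i j1 = c * a i j2))"

definition is_collapsing :: "nat \<Rightarrow> nat \<Rightarrow> (nat \<Rightarrow> nat \<Rightarrow> real) \<Rightarrow> nat set set \<Rightarrow> bool" where
  "is_collapsing I J a Cs =
     ((\<forall>C\<in>Cs. C \<noteq> {}) \<and> \<Union>Cs = {..<J} \<and>
      (\<forall>C1\<in>Cs. \<forall>C2\<in>Cs. C1 \<noteq> C2 \<longrightarrow> C1 \<inter> C2 = {}) \<and>
      (\<forall>C\<in>Cs. \<forall>j1\<in>C. \<forall>j2\<in>C. pos_multiple I a j1 j2))"

definition is_maximal_collapsing :: "nat \<Rightarrow> nat \<Rightarrow> (nat \<Rightarrow> nat \<Rightarrow> real) \<Rightarrow> nat set set \<Rightarrow> bool" where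
  "is_maximal_collapsing I J a Cs =
     (is_collapsing I J a Cs \<and>
      (\<forall>C1\<in>Cs. \<forall>C2\<in>Cs. C1 \<noteq> C2 \<longrightarrow> (\<forall>j1\<in>C1. \<forall>j2\<in>C2. \<not> pos_multiple I a j1 j2)))"

(* The statistic T(n) = (n_{C_1},...,n_{C_K}), indexed by the categories themselves *)
definition collapsed_stat :: "nat set set \<Rightarrow> (nat \<Rightarrow> nat) \<Rightarrow> nat set \<Rightarrow> nat" where
  "collapsed_stat Cs n = (\<lambda>C. if C \<in> Cs then (\<Sum>j\<in>C. n j) else 0)"

end

theory Submission
  imports Defs "HOL-Computational_Algebra.Polynomial"
begin

text \<open>The factors \<open>exp (-\<theta>\<cdot>a\<^sub>j)\<close> and \<open>n\<^sub>j!\<close> cancel or are constant, so the likelihood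
  ratio of \<open>x\<close> and \<open>y\<close> is constant iff the monomials \<open>\<Prod>\<^sub>j (\<theta>\<cdot>a\<^sub>j)^x\<^sub>j\<close> and
  \<open>\<Prod>\<^sub>j (\<theta>\<cdot>a\<^sub>j)^y\<^sub>j\<close> are proportional as functions of \<open>\<theta>\<close>. Within a category \<open>C\<close> every
  \<open>\<theta>\<cdot>a\<^sub>j\<close> is a fixed positive multiple of \<open>\<theta>\<cdot>a\<^sub>k\<close> for a fixed \<open>k \<in> C\<close>, so equal
  category totals give proportional monomials. Conversely, restrict both monomials to a line
  \<open>\<theta> = 1 + t q\<close>, on which they become products of linear polynomials in \<open>t\<close>. For generic
  positive \<open>q\<close> the line crosses the hyperplane \<open>\<theta>\<cdot>a\<^sub>k = 0\<close> at a parameter \<open>t\<^sub>0\<close> where, by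
  maximality, no hyperplane of another category is crossed; the root multiplicity at \<open>t\<^sub>0\<close> then
  reads off the total count of \<open>C\<close>.\<close>

definition rate_monomial ::
    "nat \<Rightarrow> nat \<Rightarrow> (nat \<Rightarrow> nat \<Rightarrow> real) \<Rightarrow> (nat \<Rightarrow> real) \<Rightarrow> (nat \<Rightarrow> nat) \<Rightarrow> real" where
  "rate_monomial I J a \<theta> n = (\<Prod>j<J. dotp I \<theta> a j ^ n j)"

lemma dotp_pos:
  assumes "\<forall>i<I. \<theta> i > 0" "\<forall>i<I. a i j \<ge> 0" "\<exists>i<I. a i j \<noteq> 0"
  shows "dotp I \<theta> a j > 0"
proof -
  obtain i where i: "i < I" "a i j \<noteq> 0" using assms(3) by blast
  have "0 < \<theta> i * a i j" using i assms(1,2) by (simp add: order_le_neq_trans)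
  then show ?thesis unfolding dotp_def
    by (intro sum_pos2[where i=i]) (use i assms in \<open>auto intro: less_imp_le\<close>)
qed

lemma dotp_proportional:
  assumes "\<forall>i<I. a i j = c * a i k"
  shows "dotp I \<theta> a j = c * dotp I \<theta> a k"
  using assms by (simp add: dotp_def sum_distrib_left mult_ac)

lemma rate_monomial_pos:
  assumes "\<forall>i<I. \<theta> i > 0" "\<forall>i<I. \<forall>j<J. a i j \<ge> 0" "\<forall>j<J. \<exists>i<I. a i j \<noteq> 0"
  shows "rate_monomial I J a \<theta> n > 0"
  unfolding rate_monomial_def using assms by (intro prod_pos zero_less_power dotp_pos) auto

lemma pois_pmf_ratio:
  "pois_pmf I J a \<theta> x / pois_pmf I J a \<theta> y =
     rate_monomial I J a \<theta> x / rate_monomial I J a \<theta> y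
       * ((\<Prod>j<J. fact (y j)) / (\<Prod>j<J. fact (x j)))"
proof -
  have "(\<Prod>j<J. exp (- dotp I \<theta> a j)) > 0" by (intro prod_pos) auto
  moreover have "(\<Prod>j<J. fact (n j) :: real) > 0" for n :: "nat \<Rightarrow> nat"
    by (intro prod_pos) auto
  ultimately show ?thesis
    by (simp add: pois_pmf_def rate_monomial_def prod.distrib prod_dividef)
qed

lemma pois_pmf_ratio_constant_iff:
  assumes "\<forall>i<I. \<forall>j<J. a i j \<ge> 0" "\<forall>j<J. \<exists>i<I. a i j \<noteq> 0"
  shows "(\<exists>r. \<forall>\<theta>. (\<forall>i<I. \<theta> i > 0) \<longrightarrow> pois_pmf I J a \<theta> x / pois_pmf I J a \<theta> y = r)
    \<longleftrightarrow> (\<forall>\<theta>. (\<forall>i<I. \<theta> i > 0) \<longrightarrow>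
          rate_monomial I J a \<theta> x * rate_monomial I J a (\<lambda>_. 1) y =
          rate_monomial I J a (\<lambda>_. 1) x * rate_monomial I J a \<theta> y)"
    (is "(\<exists>r. \<forall>\<theta>. ?pos \<theta> \<longrightarrow> ?ratio \<theta> = r) \<longleftrightarrow> (\<forall>\<theta>. ?pos \<theta> \<longrightarrow> ?cross \<theta>)")
proof -
  define M where "M \<theta> n = rate_monomial I J a \<theta> n" for \<theta> n
  define c where "c = (\<Prod>j<J. fact (y j)) / (\<Prod>j<J. fact (x j) :: real)"
  have "c > 0" unfolding c_def by (intro divide_pos_pos prod_pos) auto
  have ratio: "?ratio \<theta> = M \<theta> x / M \<theta> y * c" for \<theta>
    unfolding M_def c_def by (rule pois_pmf_ratio)
  have M_pos: "M \<theta> n > 0" if "?pos \<theta>" for \<theta> n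
    unfolding M_def using rate_monomial_pos assms that by blast
  have one_pos: "?pos (\<lambda>_. 1)" by simp
  have cross_iff: "?cross \<theta> \<longleftrightarrow> ?ratio \<theta> = ?ratio (\<lambda>_. 1)" if "?pos \<theta>" for \<theta>
    using M_pos[OF that, of y] M_pos[OF one_pos, of y] \<open>c > 0\<close>
    by (simp add: ratio M_def[symmetric] divide_eq_eq eq_divide_eq mult_ac)
  show ?thesis
  proof
    assume "\<exists>r. \<forall>\<theta>. ?pos \<theta> \<longrightarrow> ?ratio \<theta> = r"
    then show "\<forall>\<theta>. ?pos \<theta> \<longrightarrow> ?cross \<theta>"
      using cross_iff one_pos by metis
  next
    assume "\<forall>\<theta>. ?pos \<theta> \<longrightarrow> ?cross \<theta>"
    then show "\<exists>r. \<forall>\<theta>. ?pos \<theta> \<longrightarrow> ?ratio \<theta> = r"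
      using cross_iff by blast
  qed
qed

lemma order_power:
  fixes p :: "'a::idom poly"
  assumes "p \<noteq> 0"
  shows "order t (p ^ m) = m * order t p"
proof (induction m)
  case (Suc m)
  have "order t (p ^ Suc m) = order t p + order t (p ^ m)"
    unfolding power_Suc by (rule order_mult) (use assms in simp)
  then show ?case using Suc by simp
qed simp

lemma order_prod_power:
  fixes p :: "'b \<Rightarrow> 'a::idom poly"
  assumes "\<forall>j\<in>A. p j \<noteq> 0"
  shows "order t (\<Prod>j\<in>A. p j ^ n j) = (\<Sum>j\<in>A. n j * order t (p j))"
  using assms
proof (induction A rule: infinite_finite_induct)
  case (insert k A)
  have "(\<Prod>j\<in>A. p j ^ n j) \<noteq> 0" using insert by simp
  then have "order t (\<Prod>j\<in>insert k A. p j ^ n j) = order t (p k ^ n k) + order t (\<Prod>j\<in>A. p j ^ n j)"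
    using insert by (simp add: order_mult)
  then show ?case using insert by (simp add: order_power)
qed simp_all

lemma order_linear:
  fixes u v t :: "'a::field"
  assumes "[:u, v:] \<noteq> 0"
  shows "order t [:u, v:] = (if v \<noteq> 0 \<and> u + t * v = 0 then 1 else 0)"
proof (cases "v \<noteq> 0 \<and> u + t * v = 0")
  case True
  then have "u = - (t * v)" by (simp add: eq_neg_iff_add_eq_0)
  then have "[:u, v:] = smult v [:-t, 1:]" by simp
  then have "order t [:u, v:] = order t ([:-t, 1:] ^ 1)"
    using True order_smult[of v t "[:-t, 1:]"] by simp
  then show ?thesis using True order_power_n_n[of t 1] by simp
next
  case False
  with assms have "poly [:u, v:] t \<noteq> 0" by (auto simp: algebra_simps)
  then show ?thesis using False by (simp add: order_0I)
qed

lemma poly_eq_if_agree_on_infinite: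
  fixes p q :: "'a::idom poly"
  assumes "infinite S" "\<forall>t\<in>S. poly p t = poly q t"
  shows "p = q"
proof (rule ccontr)
  assume "p \<noteq> q"
  then have "finite {t. poly (p - q) t = 0}" by (intro poly_roots_finite) simp
  moreover have "S \<subseteq> {t. poly (p - q) t = 0}" using assms(2) by auto
  ultimately show False using assms(1) finite_subset by blast
qed

text \<open>The witness is \<open>q i = s ^ i\<close> for any \<open>s > 0\<close> that is not a root of the nonzero
  polynomials \<open>\<Sum>\<^sub>i w\<^sub>i X\<^sup>i\<close>.\<close>

lemma positive_vector_avoiding_hyperplanes:
  fixes W :: "(nat \<Rightarrow> real) set"
  assumes "finite W" "\<forall>w\<in>W. \<exists>i<I. w i \<noteq> 0"
  obtains q where "\<forall>i. q i > 0" "\<forall>w\<in>W. (\<Sum>i<I. q i * w i) \<noteq> 0"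
proof -
  define P where "P w = (\<Sum>i<I. monom (w i) i)" for w :: "nat \<Rightarrow> real"
  have coeff_P: "coeff (P w) k = (if k < I then w k else 0)" for w k
    by (simp add: P_def coeff_sum)
  have P_nonzero: "P w \<noteq> 0" if "w \<in> W" for w
  proof
    assume "P w = 0"
    then have "\<forall>k<I. w k = 0" using coeff_P by (metis coeff_0)
    then show False using assms(2) that by blast
  qed
  have poly_P: "poly (P w) s = (\<Sum>i<I. s ^ i * w i)" for w s
    by (simp add: P_def poly_sum poly_monom mult.commute)
  have "finite (\<Union>w\<in>W. {s. poly (P w) s = 0})"
    using assms(1) P_nonzero poly_roots_finite by blast
  moreover have "infinite {0::real<..}" by (simp add: infinite_Ioi)
  ultimately obtain s where "s \<in> {0::real<..}" "s \<notin> (\<Union>w\<in>W. {s. poly (P w) s = 0})"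
    by (meson finite_subset subsetI)
  then show ?thesis by (intro that[of "\<lambda>i. s ^ i"]) (auto simp: poly_P)
qed

lemma collapsing_category_subset:
  "is_collapsing I J a Cs \<Longrightarrow> C \<in> Cs \<Longrightarrow> C \<subseteq> {..<J}"
  unfolding is_collapsing_def by (metis Union_upper)

lemma collapsing_covers:
  "is_collapsing I J a Cs \<Longrightarrow> j < J \<Longrightarrow> \<exists>C\<in>Cs. j \<in> C"
  unfolding is_collapsing_def by (metis UnionE lessThan_iff)

lemma collapsing_categoryE:
  assumes "is_collapsing I J a Cs" "C \<in> Cs"
  obtains k c where "k \<in> C" "\<forall>j\<in>C. c j > 0 \<and> (\<forall>i<I. a i j = c j * a i k)"
proof -
  have "C \<noteq> {}" and proportional: "\<forall>j1\<in>C. \<forall>j2\<in>C. pos_multiple I a j1 j2"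
    using assms by (simp_all add: is_collapsing_def)
  then obtain k where k: "k \<in> C" by blast
  with proportional have "\<forall>j\<in>C. \<exists>c>0. \<forall>i<I. a i j = c * a i k"
    by (simp add: pos_multiple_def)
  then obtain c where "\<forall>j\<in>C. c j > 0 \<and> (\<forall>i<I. a i j = c j * a i k)" by metis
  with k show ?thesis by (rule that)
qed

lemma maximal_collapsing_is_collapsing:
  "is_maximal_collapsing I J a Cs \<Longrightarrow> is_collapsing I J a Cs"
  by (simp add: is_maximal_collapsing_def)

lemma maximal_collapsing_not_pos_multiple:
  "is_maximal_collapsing I J a Cs \<Longrightarrow> C1 \<in> Cs \<Longrightarrow> C2 \<in> Cs \<Longrightarrow> C1 \<noteq> C2 \<Longrightarrow>
    j1 \<in> C1 \<Longrightarrow> j2 \<in> C2 \<Longrightarrow> \<not> pos_multiple I a j1 j2"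
  unfolding is_maximal_collapsing_def by blast

lemma prod_lessThan_collapsing:
  assumes "is_collapsing I J a Cs"
  shows "(\<Prod>j<J. f j) = (\<Prod>C\<in>Cs. \<Prod>j\<in>C. f j)"
proof -
  have finite: "\<forall>C\<in>Cs. finite C"
    using collapsing_category_subset[OF assms] finite_subset by blast
  have disjoint: "\<forall>C1\<in>Cs. \<forall>C2\<in>Cs. C1 \<noteq> C2 \<longrightarrow> C1 \<inter> C2 = {}"
    and union: "\<Union>Cs = {..<J}"
    using assms unfolding is_collapsing_def by auto
  show ?thesis
    using prod.Union_disjoint[OF finite disjoint, of f] by (simp only: union comp_def)
qed

lemma prod_power_dotp_proportional:
  assumes "\<forall>j\<in>C. \<forall>i<I. a i j = c j * a i k"
  shows "(\<Prod>j\<in>C. dotp I \<theta> a j ^ n j) = (\<Prod>j\<in>C. c j ^ n j) * dotp I \<theta> a k ^ (\<Sum>j\<in>C. n j)"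
proof -
  have "dotp I \<theta> a j = c j * dotp I \<theta> a k" if "j \<in> C" for j
    using assms that by (simp add: dotp_proportional)
  then have "(\<Prod>j\<in>C. dotp I \<theta> a j ^ n j) = (\<Prod>j\<in>C. c j ^ n j * dotp I \<theta> a k ^ n j)"
    by (intro prod.cong) (simp_all add: power_mult_distrib)
  then show ?thesis by (simp add: prod.distrib power_sum)
qed

lemma rate_monomial_cross_eq_if_collapsed_stat_eq:
  assumes "is_collapsing I J a Cs" "collapsed_stat Cs x = collapsed_stat Cs y"
  shows "rate_monomial I J a \<theta> x * rate_monomial I J a \<theta>' y =
    rate_monomial I J a \<theta>' x * rate_monomial I J a \<theta> y"
proof -
  let ?P = "\<lambda>C \<theta> n. \<Prod>j\<in>C. dotp I \<theta> a j ^ n j"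
  have category_eq: "?P C \<theta> x * ?P C \<theta>' y = ?P C \<theta>' x * ?P C \<theta> y" if C: "C \<in> Cs" for C
  proof -
    obtain k c where "k \<in> C" "\<forall>j\<in>C. c j > 0 \<and> (\<forall>i<I. a i j = c j * a i k)"
      by (rule collapsing_categoryE[OF assms(1) C])
    then have proportional: "\<forall>j\<in>C. \<forall>i<I. a i j = c j * a i k" by blast
    have "(\<Sum>j\<in>C. x j) = (\<Sum>j\<in>C. y j)"
      using C fun_cong[OF assms(2), of C] by (simp add: collapsed_stat_def)
    then show ?thesis
      by (simp only: prod_power_dotp_proportional[OF proportional]) (simp add: mult_ac)
  qed
  have "rate_monomial I J a \<theta> x * rate_monomial I J a \<theta>' y = (\<Prod>C\<in>Cs. ?P C \<theta> x * ?P C \<theta>' y)"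
    by (simp add: rate_monomial_def prod_lessThan_collapsing[OF assms(1)] prod.distrib)
  also have "\<dots> = (\<Prod>C\<in>Cs. ?P C \<theta>' x * ?P C \<theta> y)"
    using category_eq by (rule prod.cong[OF refl])
  also have "\<dots> = rate_monomial I J a \<theta>' x * rate_monomial I J a \<theta> y"
    by (simp add: rate_monomial_def prod_lessThan_collapsing[OF assms(1)] prod.distrib)
  finally show ?thesis .
qed

lemma rate_monomial_on_line:
  "rate_monomial I J a (\<lambda>i. \<theta> i + t * q i) n =
     poly (\<Prod>j<J. [:dotp I \<theta> a j, dotp I q a j:] ^ n j) t"
  by (simp add: rate_monomial_def dotp_def poly_prod algebra_simps sum.distrib sum_distrib_left)

text \<open>The direction \<open>q\<close> is chosen so that \<open>q\<cdot>a\<^sub>k \<noteq> 0\<close> and \<open>q\<cdot>w\<^sub>j \<noteq> 0\<close> for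
  \<open>w\<^sub>j = (1\<cdot>a\<^sub>j) a\<^sub>k - (1\<cdot>a\<^sub>k) a\<^sub>j\<close>, \<open>j \<notin> C\<close>; maximality is exactly what makes these
  \<open>w\<^sub>j\<close> nonzero.\<close>

lemma line_crosses_only_category_hyperplanes:
  assumes nonneg: "\<forall>i<I. \<forall>j<J. a i j \<ge> 0" and nonzero: "\<forall>j<J. \<exists>i<I. a i j \<noteq> 0"
    and max: "is_maximal_collapsing I J a Cs" and C: "C \<in> Cs"
  obtains q t0 where "\<forall>i. q i > 0"
    "\<And>j. j < J \<Longrightarrow>
       (dotp I q a j \<noteq> 0 \<and> dotp I (\<lambda>_. 1) a j + t0 * dotp I q a j = 0) \<longleftrightarrow> j \<in> C"
proof -
  have coll: "is_collapsing I J a Cs" using max by (rule maximal_collapsing_is_collapsing)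
  obtain k c where k: "k \<in> C" and c: "\<forall>j\<in>C. c j > 0 \<and> (\<forall>i<I. a i j = c j * a i k)"
    by (rule collapsing_categoryE[OF coll C])
  have k_less: "k < J" using collapsing_category_subset[OF coll C] k by blast
  define al where "al j = dotp I (\<lambda>_. 1) a j" for j
  have al_pos: "al j > 0" if "j < J" for j
    unfolding al_def using nonneg nonzero that by (intro dotp_pos) auto
  define w where "w j = (\<lambda>i. al j * a i k - al k * a i j)" for j
  have w_nonzero: "\<exists>i<I. w j i \<noteq> 0" if j: "j < J" "j \<notin> C" for j
  proof (rule ccontr)
    assume "\<not> (\<exists>i<I. w j i \<noteq> 0)"
    then have "\<forall>i<I. a i j = (al j / al k) * a i k"
      using al_pos[OF k_less] by (auto simp: w_def field_simps)
    then have "pos_multiple I a j k"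
      unfolding pos_multiple_def using al_pos[OF k_less] al_pos[OF j(1)]
      by (intro exI[of _ "al j / al k"]) auto
    moreover obtain C' where "C' \<in> Cs" "j \<in> C'"
      using collapsing_covers[OF coll j(1)] by blast
    ultimately show False
      using maximal_collapsing_not_pos_multiple[OF max _ C, of C' j k] k j(2) by blast
  qed
  define W where "W = insert (\<lambda>i. a i k) (w ` ({..<J} - C))"
  have "finite W" by (simp add: W_def)
  moreover have "\<forall>v\<in>W. \<exists>i<I. v i \<noteq> 0"
    using nonzero k_less w_nonzero by (auto simp: W_def)
  ultimately obtain q where q_pos: "\<forall>i. q i > 0" and q_avoids: "\<forall>v\<in>W. (\<Sum>i<I. q i * v i) \<noteq> 0"
    by (rule positive_vector_avoiding_hyperplanes)
  define be where "be j = dotp I q a j" for j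
  have be_k: "be k \<noteq> 0" using q_avoids by (simp add: W_def be_def dotp_def)
  have w_avoided: "al j * be k \<noteq> al k * be j" if "j < J" "j \<notin> C" for j
  proof -
    have "(\<Sum>i<I. q i * w j i) = al j * be k - al k * be j"
      by (simp add: w_def be_def dotp_def algebra_simps sum_subtractf sum_distrib_left)
    then show ?thesis using q_avoids that by (auto simp: W_def)
  qed
  define t0 where "t0 = - al k / be k"
  have "(be j \<noteq> 0 \<and> al j + t0 * be j = 0) \<longleftrightarrow> j \<in> C" if "j < J" for j
  proof (cases "j \<in> C")
    case True
    then have "al j = c j * al k" "be j = c j * be k"
      using c unfolding al_def be_def by (simp_all add: dotp_proportional)
    moreover have "c j > 0" using c True by blast
    ultimately show ?thesis using True be_k by (simp add: t0_def field_simps)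
  next
    case False
    have "al j + t0 * be j \<noteq> 0"
    proof
      assume "al j + t0 * be j = 0"
      then have "al j * be k = al k * be j" using be_k by (simp add: t0_def field_simps)
      then show False using w_avoided[OF that False] by simp
    qed
    then show ?thesis using False by simp
  qed
  then show ?thesis using that[of q t0] q_pos unfolding al_def be_def by blast
qed

lemma collapsed_stat_eq_if_rate_monomial_cross_eq:
  assumes nonneg: "\<forall>i<I. \<forall>j<J. a i j \<ge> 0" and nonzero: "\<forall>j<J. \<exists>i<I. a i j \<noteq> 0"
    and max: "is_maximal_collapsing I J a Cs"
    and cross: "\<forall>\<theta>. (\<forall>i<I. \<theta> i > 0) \<longrightarrow>
      rate_monomial I J a \<theta> x * rate_monomial I J a (\<lambda>_. 1) y =
      rate_monomial I J a (\<lambda>_. 1) x * rate_monomial I J a \<theta> y"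
  shows "collapsed_stat Cs x = collapsed_stat Cs y"
proof
  fix C
  show "collapsed_stat Cs x C = collapsed_stat Cs y C"
  proof (cases "C \<in> Cs")
    case False
    then show ?thesis by (simp add: collapsed_stat_def)
  next
    case C: True
    have C_subset: "C \<subseteq> {..<J}"
      using collapsing_category_subset[OF maximal_collapsing_is_collapsing[OF max] C] .
    obtain q t0 where q_pos: "\<forall>i. q i > 0" and crossing:
      "\<And>j. j < J \<Longrightarrow>
         (dotp I q a j \<noteq> 0 \<and> dotp I (\<lambda>_. 1) a j + t0 * dotp I q a j = 0) \<longleftrightarrow> j \<in> C"
      using line_crosses_only_category_hyperplanes[OF nonneg nonzero max C] by blast
    define L where "L j = [:dotp I (\<lambda>_. 1) a j, dotp I q a j:]" for j
    define P where "P n = (\<Prod>j<J. L j ^ n j)" for n :: "nat \<Rightarrow> nat"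
    define M1 where "M1 n = rate_monomial I J a (\<lambda>_. 1) n" for n
    have M1_pos: "M1 n > 0" for n
      unfolding M1_def using nonneg nonzero by (intro rate_monomial_pos) auto
    have "poly (smult (M1 y) (P x)) t = poly (smult (M1 x) (P y)) t" if "t \<ge> 0" for t
    proof -
      have "\<forall>i<I. 1 + t * q i > 0"
        using q_pos that by (metis add_pos_nonneg less_imp_le mult_nonneg_nonneg zero_less_one)
      then show ?thesis
        using cross[rule_format, of "\<lambda>i. 1 + t * q i"] rate_monomial_on_line[of I J a "\<lambda>_. 1" t q]
        by (simp add: P_def L_def M1_def mult.commute)
    qed
    then have "smult (M1 y) (P x) = smult (M1 x) (P y)"
      by (intro poly_eq_if_agree_on_infinite[of "{0..}"]) (auto simp: infinite_Ici)
    then have "order t0 (P x) = order t0 (P y)"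
      using M1_pos by (metis order_smult less_irrefl)
    moreover have "order t0 (P n) = (\<Sum>j\<in>C. n j)" for n
    proof -
      have L_nonzero: "L j \<noteq> 0" if "j < J" for j
        using dotp_pos[of I "\<lambda>_. 1" a j] nonneg nonzero that by (auto simp: L_def)
      then have "order t0 (P n) = (\<Sum>j<J. n j * order t0 (L j))"
        unfolding P_def by (intro order_prod_power) simp
      also have "\<dots> = (\<Sum>j<J. if j \<in> C then n j else 0)"
        using L_nonzero by (intro sum.cong) (simp_all add: order_linear crossing L_def)
      also have "\<dots> = (\<Sum>j\<in>C. n j)"
        using C_subset by (simp add: sum.inter_restrict[symmetric] Int_absorb1)
      finally show ?thesis .
    qed
    ultimately show ?thesis using C by (simp add: collapsed_stat_def)
  qed
qed

lemma rate_monomial_cross_eq_iff_collapsed_stat_eq: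
  assumes "\<forall>i<I. \<forall>j<J. a i j \<ge> 0" "\<forall>j<J. \<exists>i<I. a i j \<noteq> 0"
    and "is_maximal_collapsing I J a Cs"
  shows "(\<forall>\<theta>. (\<forall>i<I. \<theta> i > 0) \<longrightarrow>
      rate_monomial I J a \<theta> x * rate_monomial I J a (\<lambda>_. 1) y =
      rate_monomial I J a (\<lambda>_. 1) x * rate_monomial I J a \<theta> y)
    \<longleftrightarrow> collapsed_stat Cs x = collapsed_stat Cs y"
  using collapsed_stat_eq_if_rate_monomial_cross_eq[OF assms]
    rate_monomial_cross_eq_if_collapsed_stat_eq[OF maximal_collapsing_is_collapsing[OF assms(3)]]
  by blast

theorem theorem1:
  fixes I J :: nat and a :: "nat \<Rightarrow> nat \<Rightarrow> real" and Cs :: "nat set set"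
    and x y :: "nat \<Rightarrow> nat"
  assumes "I > 0" and "J > 0"
    and "\<forall>i<I. \<forall>j<J. a i j \<ge> 0"
    and "\<forall>j<J. \<exists>i<I. a i j \<noteq> 0"
    and "is_maximal_collapsing I J a Cs"
  shows "(\<exists>r::real. \<forall>\<theta>::nat \<Rightarrow> real. (\<forall>i<I. \<theta> i > 0) \<longrightarrow>
            pois_pmf I J a \<theta> x / pois_pmf I J a \<theta> y = r)
         \<longleftrightarrow> collapsed_stat Cs x = collapsed_stat Cs y"
  using pois_pmf_ratio_constant_iff[OF assms(3,4)]
    rate_monomial_cross_eq_iff_collapsed_stat_eq[OF assms(3-5)]
  by (rule trans)

end
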